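(* Let $G_{\mathrm{maj}}$ be the $q$-grammar with master variables $S=\{x,y\}$, rule $x_j\mapsto q^jx_0y_0$, $y_j\mapsto q^jx_0y_0$ ($j\ge0$), and order LPO, and let $D$ be its $q$-derivative. Let $\phi$ be the evaluation with $\phi(x_j)=xq^j$ and $\phi(y_j)=yq^j$ for all $j\ge0$ (into $\mathbb{K}[q,x,y]$, $x,y$ commuting indeterminates). Then for all $n\ge1$, \[ \phi\big(D^n(x_0)\big)=A^{\mathrm{maj}}_n(q;x,y):=\sum_{\sigma\in\mathfrak{S}_n}q^{\operatorname{maj}(\sigma)}x^{\operatorname{asc}(\sigma)}y^{\operatorname{des}(\sigma)}. \]
   Context: Let $\mathbb{K}$ be a commutative ring with unity and characteristic zero, $q$ an indeterminate. For a set $S$ of master variables, $\mathbb{S}=\{s_i:s\in S,\ i\in\{0,1,2,\dots\}\}$ is a set of non-commuting variables, $F(\mathbb{S})$ the free group on $\mathbb{S}$ and $\mathbb{E}=\mathbb{K}[q][F(\mathbb{S})]$ its group algebra (finite $\mathbb{K}[q]$-combinations of reduced words in letters from $\mathbb{S}\cup\mathbb{S}^{-1}$). A rule $R$ assigns to each $s_i$ an element $R(s_i)\in\mathbb{E}$, extended by $R(s_i^{-1})=-s_i^{-1}R(s_i)s_{i+1}^{-1}$. The up-arrow $\uparrow$ is the linear map replacing each letter $s_i^{\pm1}$ of a word by $s_{i+1}^{\pm1}$. An order rewrites each word by permuting its letters (extended linearly); LPO stably reorders the letters of a word according to the position of their underlying variable in the sequence $x_0,x_1,x_2,\dots,y_0,y_1,y_2,\dots$.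 A $q$-grammar is a triple $(S,R,\rho)$; its $q$-derivative is the $\mathbb{K}[q]$-linear map $D$ with $D(w_1\cdots w_n)=\sum_{j=1}^n\rho\big(w_1\cdots w_{j-1}R(w_j)\uparrow(w_{j+1}\cdots w_n)\big)$ for letters $w_j\in\mathbb{S}\cup\mathbb{S}^{-1}$, and $D^k=D\circ D^{k-1}$, $D^0=\mathrm{id}$. An evaluation $\phi$ sends each $s_i$ to an element of a commutative ring containing $\mathbb{K}[q]$ and is extended to a $\mathbb{K}[q]$-linear ring morphism on $\mathbb{E}$ with $\phi(s_i^{-1})=\phi(s_i)^{-1}$. For $\sigma\in\mathfrak{S}_n$ with the convention $\sigma_0=\sigma_{n+1}=0$, an index $0\le i\le n$ is a descent if $\sigma_i>\sigma_{i+1}$ and an ascent otherwise; $\operatorname{des},\operatorname{asc}$ count them. $\operatorname{maj}(\sigma)=\sum_{1\le i\le n-1,\ \sigma_i>\sigma_{i+1}}i$ is the usual major index. *)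

theory Defs
  imports "HOL-Computational_Algebra.Polynomial" "HOL-Library.Poly_Mapping"
    "HOL-Library.Product_Plus" "HOL-Library.Product_Lexorder"
    "HOL-Combinatorics.Permutations"
begin

datatype mvar = X | Y

text \<open>A letter (v,i,True) is v_i, a letter (v,i,False) is v_i^{-1}.\<close>
type_synonym letter = "mvar \<times> nat \<times> bool"
type_synonym word = "letter list"

definition inverse_letters :: "letter \<Rightarrow> letter \<Rightarrow> bool" where
  "inverse_letters a b \<longleftrightarrow> fst a = fst b \<and> fst (snd a) = fst (snd b) \<and> snd (snd a) \<noteq> snd (snd b)"

fun red_push :: "letter \<Rightarrow> word \<Rightarrow> word" where
  "red_push a [] = [a]"
| "red_push a (b # w) = (if inverse_letters a b then w else a # b # w)"

definition fred :: "word \<Rightarrow> word" where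
  "fred w = foldr red_push w []"

text \<open>Elements of E: finitely supported K[q]-combinations of (reduced) words.\<close>
type_synonym 'k E = "word \<Rightarrow>\<^sub>0 'k poly"

definition emon :: "word \<Rightarrow> 'k::comm_ring_1 E" where
  "emon w = Poly_Mapping.single (fred w) 1"

definition escale :: "'k::comm_ring_1 poly \<Rightarrow> 'k E \<Rightarrow> 'k E" where
  "escale c f = Poly_Mapping.map (\<lambda>a. c * a) f"

definition emul :: "'k::comm_ring_1 E \<Rightarrow> 'k E \<Rightarrow> 'k E" where
  "emul f g = (\<Sum>u\<in>Poly_Mapping.keys f. \<Sum>v\<in>Poly_Mapping.keys g.
                  Poly_Mapping.single (fred (u @ v)) (Poly_Mapping.lookup f u * Poly_Mapping.lookup g v))"

definition elin :: "(word \<Rightarrow> 'k::comm_ring_1 E) \<Rightarrow> 'k E \<Rightarrow> 'k E" where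
  "elin F f = (\<Sum>w\<in>Poly_Mapping.keys f. escale (Poly_Mapping.lookup f w) (F w))"

definition up_word :: "word \<Rightarrow> word" where
  "up_word w = map (\<lambda>(v, i, b). (v, Suc i, b)) w"

definition up :: "'k::comm_ring_1 E \<Rightarrow> 'k E" where
  "up = elin (\<lambda>w. emon (up_word w))"

definition rule_letter :: "(mvar \<Rightarrow> nat \<Rightarrow> 'k::comm_ring_1 E) \<Rightarrow> letter \<Rightarrow> 'k E" where
  "rule_letter R a = (case a of (s, i, b) \<Rightarrow>
     if b then R s i
     else - emul (emul (emon [(s, i, False)]) (R s i)) (emon [(s, Suc i, False)]))"

definition order_ext :: "(word \<Rightarrow> word) \<Rightarrow> 'k::comm_ring_1 E \<Rightarrow> 'k E" where
  "order_ext \<rho> = elin (\<lambda>w. emon (\<rho> w))"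

definition qder_word :: "(mvar \<Rightarrow> nat \<Rightarrow> 'k::comm_ring_1 E) \<Rightarrow> (word \<Rightarrow> word) \<Rightarrow> word \<Rightarrow> 'k E" where
  "qder_word R \<rho> w = (\<Sum>j<length w.
      order_ext \<rho> (emul (emul (emon (take j w)) (rule_letter R (w ! j)))
                        (up (emon (drop (Suc j) w)))))"

definition qder :: "(mvar \<Rightarrow> nat \<Rightarrow> 'k::comm_ring_1 E) \<Rightarrow> (word \<Rightarrow> word) \<Rightarrow> 'k E \<Rightarrow> 'k E" where
  "qder R \<rho> = elin (qder_word R \<rho>)"

definition R_maj :: "mvar \<Rightarrow> nat \<Rightarrow> 'k::comm_ring_1 E" where
  "R_maj s j = Poly_Mapping.single (fred [(X, 0, True), (Y, 0, True)]) (monom 1 j)"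

definition lpo_key :: "letter \<Rightarrow> nat \<times> nat" where
  "lpo_key a = (case a of (s, i, b) \<Rightarrow> (if s = X then 0 else 1, i))"

definition LPO :: "word \<Rightarrow> word" where
  "LPO w = sort_key lpo_key w"

definition D_maj :: "'k::comm_ring_1 E \<Rightarrow> 'k E" where
  "D_maj = qder R_maj LPO"

text \<open>Target ring: Laurent polynomials K[q^{\<pm>1}, x^{\<pm>1}, y^{\<pm>1}], as the monoid
  algebra of Z^3 over K (exponents of (q, x, y)); it contains K[q,x,y] and
  the images of all s_i are invertible there.\<close>
type_synonym 'k L = "(int \<times> int \<times> int) \<Rightarrow>\<^sub>0 'k"

definition lmono :: "int \<Rightarrow> int \<Rightarrow> int \<Rightarrow> 'k::comm_ring_1 L" where
  "lmono a b c = Poly_Mapping.single (a, b, c) 1"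

definition qemb :: "'k::comm_ring_1 poly \<Rightarrow> 'k L" where
  "qemb p = (\<Sum>i\<le>degree p. Poly_Mapping.single (int i, 0, 0) (coeff p i))"

definition phi_letter :: "letter \<Rightarrow> 'k::comm_ring_1 L" where
  "phi_letter a = (case a of (s, j, b) \<Rightarrow>
     (if b then (if s = X then lmono (int j) 1 0 else lmono (int j) 0 1)
      else (if s = X then lmono (- int j) (-1) 0 else lmono (- int j) 0 (-1))))"

definition phi_word :: "word \<Rightarrow> 'k::comm_ring_1 L" where
  "phi_word w = prod_list (map phi_letter w)"

definition phi :: "'k::comm_ring_1 E \<Rightarrow> 'k L" where
  "phi f = (\<Sum>w\<in>Poly_Mapping.keys f. qemb (Poly_Mapping.lookup f w) * phi_word w)"

definition sext :: "nat \<Rightarrow> (nat \<Rightarrow> nat) \<Rightarrow> nat \<Rightarrow> nat" where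
  "sext n \<sigma> i = (if 1 \<le> i \<and> i \<le> n then \<sigma> i else 0)"

definition des :: "nat \<Rightarrow> (nat \<Rightarrow> nat) \<Rightarrow> nat" where
  "des n \<sigma> = card {i \<in> {0..n}. sext n \<sigma> i > sext n \<sigma> (Suc i)}"

definition asc :: "nat \<Rightarrow> (nat \<Rightarrow> nat) \<Rightarrow> nat" where
  "asc n \<sigma> = card {i \<in> {0..n}. \<not> (sext n \<sigma> i > sext n \<sigma> (Suc i))}"

definition maj :: "nat \<Rightarrow> (nat \<Rightarrow> nat) \<Rightarrow> nat" where
  "maj n \<sigma> = (\<Sum>i \<in> {i. 1 \<le> i \<and> i \<le> n - 1 \<and> \<sigma> i > \<sigma> (Suc i)}. i)"

definition A_maj :: "nat \<Rightarrow> 'k::comm_ring_1 L" where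
  "A_maj n = (\<Sum>\<sigma> \<in> {\<sigma>. \<sigma> permutes {1..n}}.
                lmono (int (maj n \<sigma>)) (int (asc n \<sigma>)) (int (des n \<sigma>)))"

end

theory Submission
  imports Defs "HOL-Combinatorics.Multiset_Permutations"
begin

(* Both sides satisfy A_(n+1) = T(A_n) for the linear map T = maj_step sending q^e x^a y^b to
   q^e x^a y^b (sum_(k<b) q^k x + sum_(k<a) q^(b+k) y).

   Permutations: insert n+1 into one of the n+1 slots of a permutation with a ascents and b descents.
   Inserting it into a descent slot raises asc by one and maj by the number of descents to the right
   of the slot, which runs through 0..b-1; inserting it into an ascent slot raises des by one and maj
   by b plus the number of ascent slots to the left, which runs through b..b+a-1.

   Grammar: D maps LPO-sorted words without inverse letters to combinations of such words. For such a
   word with a letters x and b letters y, differentiating a letter s_i multiplies phi by q^(i+r) x y / phi(s_i),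
   r being the number of letters to its right. As all x's precede all y's, the y-letters produce
   q^k x for k < b and the x-letters q^(b+k) y for k < a. *)

section \<open>Permutations as lists\<close>

lemma sum_card_less_rank:
  fixes A :: "'a::linorder set"
  assumes "finite A"
  shows "(\<Sum>i\<in>A. g (card {j\<in>A. j < i})) = (\<Sum>k<card A. g k)"
proof -
  let ?rank = "\<lambda>i. card {j\<in>A. j < i}"
  have "?rank i < ?rank k" if "i \<in> A" "k \<in> A" "i < k" for i k
    by (rule psubset_card_mono) (use assms that in auto)
  then have "strict_mono_on A ?rank"
    by (intro strict_mono_onI)
  then have "inj_on ?rank A"
    by (rule strict_mono_on_imp_inj_on)
  moreover have "?rank ` A \<subseteq> {..<card A}"
    using assms by (auto intro!: psubset_card_mono)
  ultimately have "bij_betw ?rank A {..<card A}"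
    by (simp add: bij_betw_def card_image card_subset_eq)
  then show ?thesis
    by (rule sum.reindex_bij_betw)
qed

lemma sum_card_greater_rank:
  fixes A :: "'a::linorder set"
  assumes "finite A"
  shows "(\<Sum>i\<in>A. g (card {j\<in>A. i < j})) = (\<Sum>k<card A. g k)"
proof -
  have "card {j\<in>A. i < j} = card A - Suc (card {j\<in>A. j < i})" if "i \<in> A" for i
  proof -
    have "A = {j\<in>A. j < i} \<union> insert i {j\<in>A. i < j}"
      using that by auto
    also have "card \<dots> = card {j\<in>A. j < i} + Suc (card {j\<in>A. i < j})"
      using assms by (subst card_Un_disjoint) auto
    finally show ?thesis
      by simp
  qed
  then have "(\<Sum>i\<in>A. g (card {j\<in>A. i < j})) = (\<Sum>i\<in>A. g (card A - Suc (card {j\<in>A. j < i})))"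
    by simp
  also have "\<dots> = (\<Sum>k<card A. g (card A - Suc k))"
    using assms by (rule sum_card_less_rank)
  also have "\<dots> = (\<Sum>k<card A. g k)"
    by (rule sum.nat_diff_reindex)
  finally show ?thesis .
qed

definition insert_nth :: "nat \<Rightarrow> 'a \<Rightarrow> 'a list \<Rightarrow> 'a list" where
  "insert_nth i x xs = take i xs @ x # drop i xs"

lemma length_insert_nth [simp]: "length (insert_nth i x xs) = Suc (length xs)"
  by (simp add: insert_nth_def)

lemma mset_insert_nth: "mset (insert_nth i x xs) = mset (x # xs)"
  by (simp add: insert_nth_def) (metis append_take_drop_id mset_append)

lemma set_insert_nth [simp]: "set (insert_nth i x xs) = insert x (set xs)"
  by (metis mset_insert_nth set_mset_mset list.set(2))

lemma distinct_insert_nth [simp]: "distinct (insert_nth i x xs) \<longleftrightarrow> distinct (x # xs)"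
  by (rule mset_eq_imp_distinct_iff[OF mset_insert_nth])

lemma bij_betw_insert_nth_permutations_of_set:
  assumes "x \<notin> A"
  shows "bij_betw (\<lambda>(xs, i). insert_nth i x xs)
           (permutations_of_set A \<times> {..card A}) (permutations_of_set (insert x A))"
proof (rule bij_betw_imageI)
  show "inj_on (\<lambda>(xs, i). insert_nth i x xs) (permutations_of_set A \<times> {..card A})"
  proof (rule inj_onI, clarify)
    fix xs i ys j
    assume xs: "xs \<in> permutations_of_set A" "i \<le> card A"
      and ys: "ys \<in> permutations_of_set A" "j \<le> card A"
      and eq: "insert_nth i x xs = insert_nth j x ys"
    have "x \<notin> set (take i xs)" "x \<notin> set (drop i xs)"
      using assms xs by (auto simp: permutations_of_set_def dest: in_set_takeD in_set_dropD)
    then have "take i xs = take j ys" "drop i xs = drop j ys"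
      using eq by (simp_all add: insert_nth_def append_Cons_eq_iff)
    moreover have "length xs = card A" "length ys = card A"
      using xs ys by (simp_all add: length_finite_permutations_of_set)
    ultimately have "i = j"
      using xs ys by (metis length_take min.absorb2)
    with \<open>take i xs = take j ys\<close> \<open>drop i xs = drop j ys\<close> show "xs = ys \<and> i = j"
      by (metis append_take_drop_id)
  qed
  show "(\<lambda>(xs, i). insert_nth i x xs) ` (permutations_of_set A \<times> {..card A})
        = permutations_of_set (insert x A)"
  proof (intro equalityI subsetI)
    fix ys assume "ys \<in> (\<lambda>(xs, i). insert_nth i x xs) ` (permutations_of_set A \<times> {..card A})"
    then obtain xs i where "xs \<in> permutations_of_set A" "ys = insert_nth i x xs"
      by auto
    then show "ys \<in> permutations_of_set (insert x A)"
      using assms by (auto simp: permutations_of_set_def)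
  next
    fix ys assume ys: "ys \<in> permutations_of_set (insert x A)"
    then obtain us vs where ys_split: "ys = us @ x # vs"
      by (metis insertI1 permutations_of_setD(1) split_list)
    have "us @ vs \<in> permutations_of_set A"
      using ys assms by (auto simp: permutations_of_set_def ys_split)
    moreover from this have "length us \<le> card A"
      by (auto dest: length_finite_permutations_of_set)
    moreover have "ys = insert_nth (length us) x (us @ vs)"
      by (simp add: insert_nth_def ys_split)
    ultimately show "ys \<in> (\<lambda>(xs, i). insert_nth i x xs) ` (permutations_of_set A \<times> {..card A})"
      by force
  qed
qed

lemma bij_betw_map_permutes:
  assumes "distinct xs"
  shows "bij_betw (\<lambda>\<sigma>. map \<sigma> xs) {\<sigma>. \<sigma> permutes set xs} (permutations_of_set (set xs))"
proof (rule bij_betw_imageI)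
  show "inj_on (\<lambda>\<sigma>. map \<sigma> xs) {\<sigma>. \<sigma> permutes set xs}"
  proof (rule inj_onI, rule ext)
    fix \<sigma> \<tau> y
    assume "\<sigma> \<in> {\<sigma>. \<sigma> permutes set xs}" "\<tau> \<in> {\<sigma>. \<sigma> permutes set xs}" "map \<sigma> xs = map \<tau> xs"
    then show "\<sigma> y = \<tau> y"
      by (cases "y \<in> set xs") (auto simp: permutes_not_in)
  qed
  show "(\<lambda>\<sigma>. map \<sigma> xs) ` {\<sigma>. \<sigma> permutes set xs} = permutations_of_set (set xs)"
  proof (intro equalityI subsetI)
    fix ys assume "ys \<in> (\<lambda>\<sigma>. map \<sigma> xs) ` {\<sigma>. \<sigma> permutes set xs}"
    then show "ys \<in> permutations_of_set (set xs)"
      using assms by (auto simp: permutations_of_set_def permutes_image distinct_map permutes_inj_on)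
  next
    fix ys assume ys: "ys \<in> permutations_of_set (set xs)"
    define \<sigma> where "\<sigma> y = (if y \<in> set xs then the (map_of (zip xs ys) y) else y)" for y
    have "length ys = length xs"
      using ys assms by (simp add: length_finite_permutations_of_set distinct_card)
    then have map_\<sigma>: "map \<sigma> xs = ys"
      using assms by (intro nth_equalityI) (auto simp: \<sigma>_def map_of_zip_nth)
    have "\<sigma> permutes set xs"
    proof (rule bij_imp_permutes)
      have "inj_on \<sigma> (set xs)"
        using ys map_\<sigma> by (auto simp: permutations_of_set_def distinct_map)
      moreover have "\<sigma> ` set xs = set xs"
        using ys map_\<sigma> by (auto simp: permutations_of_set_def simp flip: set_map)
      ultimately show "bij_betw \<sigma> (set xs) (set xs)"
        by (simp add: bij_betw_def)
    qed (simp add: \<sigma>_def)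
    with map_\<sigma> show "ys \<in> (\<lambda>\<sigma>. map \<sigma> xs) ` {\<sigma>. \<sigma> permutes set xs}"
      by blast
  qed
qed

section \<open>Descent statistics and the recurrence for A_maj\<close>

lemma lmono_mult: "(lmono a b c :: 'k::comm_ring_1 L) * lmono a' b' c' = lmono (a + a') (b + b') (c + c')"
  by (simp add: lmono_def mult_single)

definition padded_nth :: "nat list \<Rightarrow> nat \<Rightarrow> nat" where
  "padded_nth xs j = (if 1 \<le> j \<and> j \<le> length xs then xs ! (j - 1) else 0)"

definition descents :: "nat list \<Rightarrow> nat set" where
  "descents xs = {i \<in> {0..length xs}. padded_nth xs (Suc i) < padded_nth xs i}"

(* q^maj x^asc y^des: when all entries are positive, the last position is a descent, so the
   descents sum to maj + length. *)
definition stat_mono :: "nat list \<Rightarrow> 'k::comm_ring_1 L" where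
  "stat_mono xs = lmono (int (\<Sum>(descents xs)) - int (length xs))
     (int (length xs) + 1 - int (card (descents xs))) (int (card (descents xs)))"

lemma descents_subset: "descents xs \<subseteq> {..length xs}"
  by (auto simp: descents_def)

lemma finite_descents [simp]: "finite (descents xs)"
  by (simp add: descents_def)

lemma stat_mono_permutation:
  assumes "\<sigma> permutes {1..n}"
  shows "lmono (int (maj n \<sigma>)) (int (asc n \<sigma>)) (int (des n \<sigma>)) = stat_mono (map \<sigma> [1..<Suc n])"
proof -
  let ?xs = "map \<sigma> [1..<Suc n]"
  define D where "D = descents ?xs"
  have "padded_nth ?xs j = sext n \<sigma> j" for j
    by (auto simp: padded_nth_def sext_def simp del: upt_Suc)
  then have D_eq: "D = {i \<in> {0..n}. sext n \<sigma> i > sext n \<sigma> (Suc i)}"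
    by (simp add: D_def descents_def del: upt_Suc)
  have des: "des n \<sigma> = card D"
    by (simp add: des_def D_eq)
  have asc: "int (asc n \<sigma>) = int n + 1 - int (card D)"
  proof -
    have "{i \<in> {0..n}. \<not> sext n \<sigma> i > sext n \<sigma> (Suc i)} = {0..n} - D"
      by (auto simp: D_eq)
    moreover have "D \<subseteq> {0..n}"
      by (auto simp: D_eq)
    moreover from this have "card D \<le> Suc n"
      using card_mono[of "{0..n}" D] by simp
    ultimately show ?thesis
      by (simp add: asc_def card_Diff_subset D_def)
  qed
  have maj: "\<Sum>D = maj n \<sigma> + n"
  proof (cases "n = 0")
    case True
    then show ?thesis
      by (simp add: D_eq sext_def maj_def)
  next
    case False
    have "\<sigma> n \<in> {1..n}"
      using False permutes_in_image[OF assms, of n] by simp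
    define M where "M = {i. 1 \<le> i \<and> i \<le> n - 1 \<and> \<sigma> i > \<sigma> (Suc i)}"
    have "D = insert n M"
      using False \<open>\<sigma> n \<in> {1..n}\<close> by (auto simp: D_eq M_def sext_def)
    moreover have "finite M" "n \<notin> M"
      using False by (auto simp: M_def intro: finite_subset[of _ "{..n}"])
    ultimately show ?thesis
      by (simp add: maj_def M_def)
  qed
  have "stat_mono ?xs = lmono (int (\<Sum>D) - int n) (int n + 1 - int (card D)) (int (card D))"
    by (simp add: stat_mono_def D_def del: upt_Suc)
  also have "\<dots> = lmono (int (maj n \<sigma>)) (int (asc n \<sigma>)) (int (des n \<sigma>))"
    by (simp add: des asc maj)
  finally show ?thesis
    by (rule sym)
qed

lemma A_maj_eq_sum_stat_mono:
  "(A_maj n :: 'k::comm_ring_1 L) = (\<Sum>xs\<in>permutations_of_set {1..n}. stat_mono xs)"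
proof -
  have "(A_maj n :: 'k L) = (\<Sum>\<sigma>\<in>{\<sigma>. \<sigma> permutes {1..n}}. stat_mono (map \<sigma> [1..<Suc n]))"
    unfolding A_maj_def by (rule sum.cong) (simp_all add: stat_mono_permutation del: upt_Suc)
  also have "\<dots> = (\<Sum>xs\<in>permutations_of_set {1..n}. stat_mono xs)"
    using bij_betw_map_permutes[of "[1..<Suc n]"]
    by (intro sum.reindex_bij_betw) (simp add: atLeastLessThanSuc_atLeastAtMost del: upt_Suc)
  finally show ?thesis .
qed

lemma padded_nth_insert_nth:
  assumes "i \<le> length xs"
  shows "padded_nth (insert_nth i x xs) j =
           (if j \<le> i then padded_nth xs j else if j = Suc i then x else padded_nth xs (j - 1))"
  using assms
  by (auto simp: padded_nth_def insert_nth_def nth_append nth_Cons' min_def numeral_2_eq_2)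

lemma descents_insert_nth:
  assumes "i \<le> length xs" and "\<forall>x\<in>set xs. x < N" and "0 < N"
  shows "descents (insert_nth i N xs)
           = {j\<in>descents xs. j < i} \<union> {Suc i} \<union> Suc ` {j\<in>descents xs. i < j}"
proof (rule set_eqI)
  fix k
  have below_N: "padded_nth xs j < N" for j
  proof (cases "1 \<le> j \<and> j \<le> length xs")
    case True
    then have "xs ! (j - 1) \<in> set xs"
      by (intro nth_mem) linarith
    with True show ?thesis
      using assms(2) by (simp add: padded_nth_def)
  qed (use assms(3) in \<open>auto simp: padded_nth_def\<close>)
  consider "k < i" | "k = i" | "k = Suc i" | j where "k = Suc j" "i < j"
    by (metis linorder_neqE_nat lessE)
  then show "k \<in> descents (insert_nth i N xs)
               \<longleftrightarrow> k \<in> {j\<in>descents xs. j < i} \<union> {Suc i} \<union> Suc ` {j\<in>descents xs. i < j}"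
  proof cases
    case 1
    then show ?thesis
      using assms(1) by (auto simp: descents_def padded_nth_insert_nth)
  next
    case 2
    then show ?thesis
      using assms(1) below_N[of i] by (auto simp: descents_def padded_nth_insert_nth)
  next
    case 3
    then show ?thesis
      using assms(1) below_N[of "Suc i"] by (auto simp: descents_def padded_nth_insert_nth)
  next
    case 4
    then show ?thesis
      using assms(1) by (auto simp: descents_def padded_nth_insert_nth)
  qed
qed

lemma stat_mono_insert_nth:
  assumes "i \<le> length xs" and "\<forall>x\<in>set xs. x < N" and "0 < N"
  defines "R \<equiv> {j\<in>descents xs. i < j}"
  shows "(stat_mono (insert_nth i N xs) :: 'k::comm_ring_1 L) = stat_mono xs *
           (if i \<in> descents xs then lmono (int (card R)) 1 0 else lmono (int (i + card R)) 0 1)"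
proof -
  define D where "D = descents xs"
  define L where "L = {j\<in>D. j < i}"
  have fin: "finite D" "finite L" "finite R"
    by (simp_all add: L_def R_def D_def)
  have split: "D = L \<union> (D \<inter> {i} \<union> R)"
    by (auto simp: L_def R_def D_def)
  have disj: "L \<inter> (D \<inter> {i} \<union> R) = {}" "D \<inter> {i} \<inter> R = {}"
    by (auto simp: L_def R_def D_def)
  have card_D: "card D = card L + card (D \<inter> {i}) + card R"
    using fin disj by (subst (1) split) (simp add: card_Un_disjoint)
  have sum_D: "\<Sum>D = \<Sum>L + \<Sum>(D \<inter> {i}) + \<Sum>R"
    using fin disj by (subst (1) split) (simp add: sum.union_disjoint)
  have D': "descents (insert_nth i N xs) = L \<union> {Suc i} \<union> Suc ` R"
    using descents_insert_nth[OF assms(1-3)] by (simp add: L_def R_def D_def)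
  have card_D': "card (descents (insert_nth i N xs)) = card L + 1 + card R"
    unfolding D' using fin by (subst card_Un_disjoint; auto simp: card_image L_def R_def)+
  have sum_D': "\<Sum>(descents (insert_nth i N xs)) = \<Sum>L + Suc i + \<Sum>R + card R"
    unfolding D' using fin by (subst sum.union_disjoint; auto simp: sum.reindex sum_Suc[of "\<lambda>j. j"] L_def R_def)+
  show ?thesis
    by (cases "i \<in> D") (simp_all add: stat_mono_def lmono_mult card_D sum_D card_D' sum_D' algebra_simps flip: D_def)
qed

definition insertion_factor :: "nat \<Rightarrow> nat \<Rightarrow> 'k::comm_ring_1 L" where
  "insertion_factor a b = (\<Sum>k<b. lmono (int k) 1 0) + (\<Sum>k<a. lmono (int (b + k)) 0 1)"

lemma insertion_factor_Suc_0: "insertion_factor 0 (Suc b) = insertion_factor 0 b + lmono (int b) 1 0"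
  by (simp add: insertion_factor_def)

lemma insertion_factor_Suc: "insertion_factor (Suc a) b = insertion_factor a b + lmono (int (b + a)) 0 1"
  by (simp add: insertion_factor_def)

lemma add_card_greater_eq:
  fixes D :: "nat set"
  assumes "D \<subseteq> {..n}" and "i \<in> {..n} - D"
  shows "i + card {j\<in>D. i < j} = card D + card {j\<in>{..n} - D. j < i}"
proof -
  have fin: "finite D"
    using assms(1) finite_subset by blast
  have "i = card ({j\<in>D. j < i} \<union> {j\<in>{..n} - D. j < i})"
  proof -
    have "{..<i} = {j\<in>D. j < i} \<union> {j\<in>{..n} - D. j < i}"
      using assms(2) by auto
    then show ?thesis
      by (metis card_lessThan)
  qed
  also have "\<dots> = card {j\<in>D. j < i} + card {j\<in>{..n} - D. j < i}"
    using fin by (intro card_Un_disjoint) auto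
  finally have i_eq: "i = card {j\<in>D. j < i} + card {j\<in>{..n} - D. j < i}" .
  have "D = {j\<in>D. j < i} \<union> {j\<in>D. i < j}"
    using assms(2) by (auto simp: not_less order_le_less)
  then have "card D = card ({j\<in>D. j < i} \<union> {j\<in>D. i < j})"
    by (rule arg_cong)
  also have "\<dots> = card {j\<in>D. j < i} + card {j\<in>D. i < j}"
    using fin by (intro card_Un_disjoint) auto
  finally show ?thesis
    using i_eq by simp
qed

lemma sum_stat_mono_insert_nth:
  assumes "\<forall>x\<in>set xs. x < N" and "0 < N"
  defines "D \<equiv> descents xs"
  shows "(\<Sum>i\<le>length xs. stat_mono (insert_nth i N xs) :: 'k::comm_ring_1 L)
           = stat_mono xs * insertion_factor (Suc (length xs) - card D) (card D)"
proof -
  define A where "A = {..length xs} - D"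
  define S where "S i = (stat_mono (insert_nth i N xs) :: 'k L)" for i
  have D_sub: "D \<subseteq> {..length xs}"
    by (simp add: D_def descents_subset)
  have card_A: "card A = Suc (length xs) - card D"
    using D_sub by (simp add: A_def D_def card_Diff_subset)
  have "(\<Sum>i\<in>D. S i) = (\<Sum>i\<in>D. stat_mono xs * lmono (int (card {j\<in>D. i < j})) 1 0)"
    using D_sub by (intro sum.cong) (auto simp: S_def D_def stat_mono_insert_nth assms(1,2))
  also have "\<dots> = (\<Sum>k<card D. stat_mono xs * lmono (int k) 1 0)"
    by (rule sum_card_greater_rank) (simp add: D_def)
  also have "\<dots> = stat_mono xs * (\<Sum>k<card D. lmono (int k) 1 0)"
    by (simp add: sum_distrib_left)
  finally have sum_D: "(\<Sum>i\<in>D. S i) = stat_mono xs * (\<Sum>k<card D. lmono (int k) 1 0)" .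
  have "S i = stat_mono xs * lmono (int (card D + card {j\<in>A. j < i})) 0 1" if "i \<in> A" for i
  proof -
    have "i \<le> length xs" "i \<notin> descents xs"
      using that by (auto simp: A_def D_def)
    then have "S i = stat_mono xs * lmono (int (i + card {j\<in>D. i < j})) 0 1"
      by (simp add: S_def D_def stat_mono_insert_nth assms(1,2))
    then show ?thesis
      using D_sub that by (simp only: A_def add_card_greater_eq)
  qed
  then have "(\<Sum>i\<in>A. S i) = (\<Sum>i\<in>A. stat_mono xs * lmono (int (card D + card {j\<in>A. j < i})) 0 1)"
    by (rule sum.cong[OF refl])
  also have "\<dots> = (\<Sum>k<card A. stat_mono xs * lmono (int (card D + k)) 0 1)"
    by (rule sum_card_less_rank) (simp add: A_def)
  also have "\<dots> = stat_mono xs * (\<Sum>k<card A. lmono (int (card D + k)) 0 1)"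
    by (simp add: sum_distrib_left)
  finally have sum_A: "(\<Sum>i\<in>A. S i) = stat_mono xs * (\<Sum>k<card A. lmono (int (card D + k)) 0 1)" .
  have "(\<Sum>i\<le>length xs. S i) = (\<Sum>i\<in>D. S i) + (\<Sum>i\<in>A. S i)"
    using D_sub by (simp add: A_def sum.subset_diff[of D "{..length xs}"] add.commute)
  also have "\<dots> = stat_mono xs * insertion_factor (card A) (card D)"
    by (simp add: sum_D sum_A insertion_factor_def distrib_left)
  finally show ?thesis
    by (simp add: S_def card_A)
qed

definition maj_step :: "'k::comm_ring_1 L \<Rightarrow> 'k L" where
  "maj_step f = (\<Sum>\<kappa>\<in>Poly_Mapping.keys f. Poly_Mapping.single \<kappa> (Poly_Mapping.lookup f \<kappa>) *
                   (case \<kappa> of (_, a, b) \<Rightarrow> insertion_factor (nat a) (nat b)))"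

lemma maj_step_add: "maj_step (f + g) = maj_step f + maj_step g"
  unfolding maj_step_def by (rule setsum_keys_plus_distrib) (simp_all add: single_add distrib_right)

lemma maj_step_zero [simp]: "maj_step 0 = 0"
  by (simp add: maj_step_def)

lemma maj_step_sum: "maj_step (\<Sum>i\<in>I. f i) = (\<Sum>i\<in>I. maj_step (f i))"
  by (induction I rule: infinite_finite_induct) (simp_all add: maj_step_add)

lemma maj_step_single:
  "maj_step (Poly_Mapping.single (e, int a, int b) c) = Poly_Mapping.single (e, int a, int b) c * insertion_factor a b"
  by (cases "c = 0") (simp_all add: maj_step_def)

lemma maj_step_lmono:
  "maj_step (lmono e (int a) (int b)) = (lmono e (int a) (int b) :: 'k::comm_ring_1 L) * insertion_factor a b"
  by (simp add: lmono_def maj_step_single)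

lemma maj_step_qemb_mult:
  "maj_step (qemb c * lmono e (int a) (int b)) = qemb c * lmono e (int a) (int b) * (insertion_factor a b :: 'k::comm_ring_1 L)"
proof -
  have "qemb c * lmono e (int a) (int b) = (\<Sum>i\<le>degree c. Poly_Mapping.single (int i + e, int a, int b) (coeff c i) :: 'k L)"
    by (simp add: qemb_def lmono_def sum_distrib_right mult_single)
  then show ?thesis
    by (simp add: maj_step_sum maj_step_single sum_distrib_right)
qed

lemma maj_step_stat_mono:
  "maj_step (stat_mono xs :: 'k::comm_ring_1 L)
     = stat_mono xs * insertion_factor (Suc (length xs) - card (descents xs)) (card (descents xs))"
proof -
  have "card (descents xs) \<le> Suc (length xs)"
    using card_mono[OF _ descents_subset, of xs] by simp
  then have "stat_mono xs = (lmono (int (\<Sum>(descents xs)) - int (length xs))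
      (int (Suc (length xs) - card (descents xs))) (int (card (descents xs))) :: 'k L)"
    by (simp add: stat_mono_def add.commute)
  then show ?thesis
    by (simp only: maj_step_lmono)
qed

lemma A_maj_Suc: "(A_maj (Suc n) :: 'k::comm_ring_1 L) = maj_step (A_maj n)"
proof -
  have bij: "bij_betw (\<lambda>(xs, i). insert_nth i (Suc n) xs)
               (permutations_of_set {1..n} \<times> {..n}) (permutations_of_set {1..Suc n})"
    using bij_betw_insert_nth_permutations_of_set[of "Suc n" "{1..n}"]
    by (simp add: atLeastAtMostSuc_conv)
  have "(A_maj (Suc n) :: 'k L) = (\<Sum>ys\<in>permutations_of_set {1..Suc n}. stat_mono ys)"
    by (rule A_maj_eq_sum_stat_mono)
  also have "\<dots> = (\<Sum>p\<in>permutations_of_set {1..n} \<times> {..n}.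
                       stat_mono ((\<lambda>(xs, i). insert_nth i (Suc n) xs) p))"
    by (rule sum.reindex_bij_betw[OF bij, symmetric])
  also have "\<dots> = (\<Sum>xs\<in>permutations_of_set {1..n}. \<Sum>i\<le>n. stat_mono (insert_nth i (Suc n) xs))"
    by (simp add: sum.cartesian_product prod.case_distrib)
  also have "\<dots> = (\<Sum>xs\<in>permutations_of_set {1..n}. maj_step (stat_mono xs))"
  proof (rule sum.cong[OF refl])
    fix xs assume xs: "xs \<in> permutations_of_set {1..n}"
    then have "length xs = n" "\<forall>x\<in>set xs. x < Suc n"
      by (auto simp: length_finite_permutations_of_set permutations_of_set_def)
    then show "(\<Sum>i\<le>n. stat_mono (insert_nth i (Suc n) xs)) = maj_step (stat_mono xs :: 'k L)"
      using sum_stat_mono_insert_nth[of xs "Suc n"] by (simp add: maj_step_stat_mono)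
  qed
  also have "\<dots> = maj_step (A_maj n)"
    by (simp add: A_maj_eq_sum_stat_mono maj_step_sum)
  finally show ?thesis .
qed

lemma A_maj_0: "(A_maj 0 :: 'k::comm_ring_1 L) = lmono 0 1 0"
  by (simp add: A_maj_eq_sum_stat_mono stat_mono_def descents_def padded_nth_def)

section \<open>The q-derivative of G_maj and its evaluation\<close>

definition positive_word :: "word \<Rightarrow> bool" where
  "positive_word w \<longleftrightarrow> (\<forall>l\<in>set w. snd (snd l))"

lemma positive_word_simps [simp]:
  "positive_word []"
  "positive_word (l # w) \<longleftrightarrow> snd (snd l) \<and> positive_word w"
  "positive_word (u @ v) \<longleftrightarrow> positive_word u \<and> positive_word v"
  "positive_word (up_word w) \<longleftrightarrow> positive_word w"
  "positive_word (LPO w) \<longleftrightarrow> positive_word w"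
  by (auto simp: positive_word_def up_word_def LPO_def)

lemma positive_word_take_drop [simp]:
  assumes "positive_word w"
  shows "positive_word (take j w)" "positive_word (drop j w)"
  using assms by (auto simp: positive_word_def dest: in_set_takeD in_set_dropD)

lemma fred_positive_word: "positive_word w \<Longrightarrow> fred w = w"
proof (induction w)
  case (Cons l w)
  then show ?case
    by (cases w) (auto simp: fred_def inverse_letters_def)
qed (simp add: fred_def)

lemma emon_positive_word: "positive_word w \<Longrightarrow> emon w = Poly_Mapping.single w 1"
  by (simp add: emon_def fred_positive_word)

lemma escale_single: "escale c (Poly_Mapping.single w d) = Poly_Mapping.single w (c * d)"
  by (simp add: escale_def)

lemma lookup_escale: "Poly_Mapping.lookup (escale c f) w = c * Poly_Mapping.lookup f w"
  by (simp add: escale_def map.rep_eq when_def)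

lemma keys_escale: "Poly_Mapping.keys (escale c f) \<subseteq> Poly_Mapping.keys f"
  by (auto simp: in_keys_iff lookup_escale)

lemma escale_zero [simp]: "escale 0 f = 0"
  by (rule poly_mapping_eqI) (simp add: lookup_escale)

lemma elin_single: "elin F (Poly_Mapping.single w c) = escale c (F w)"
  by (cases "c = 0") (simp_all add: elin_def)

lemma emul_single:
  "emul (Poly_Mapping.single u c) (Poly_Mapping.single v d) = Poly_Mapping.single (fred (u @ v)) (c * d)"
  by (cases "c = 0"; cases "d = 0") (simp_all add: emul_def)

lemma up_single:
  "positive_word w \<Longrightarrow> up (Poly_Mapping.single w c) = Poly_Mapping.single (up_word w) c"
  by (simp add: up_def elin_single emon_positive_word escale_single)

lemma order_ext_single:
  "positive_word (\<rho> w) \<Longrightarrow> order_ext \<rho> (Poly_Mapping.single w c) = Poly_Mapping.single (\<rho> w) c"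
  by (simp add: order_ext_def elin_single emon_positive_word escale_single)

lemma qder_word_R_maj_LPO:
  assumes "positive_word w"
  shows "(qder_word R_maj LPO w :: 'k::comm_ring_1 E) =
    (\<Sum>j<length w. Poly_Mapping.single (LPO (take j w @ [(X, 0, True), (Y, 0, True)] @ up_word (drop (Suc j) w)))
                                        (monom 1 (fst (snd (w ! j)))))"
  unfolding qder_word_def
proof (rule sum.cong[OF refl])
  fix j assume "j \<in> {..<length w}"
  then have "snd (snd (w ! j))"
    using assms by (simp add: positive_word_def)
  then obtain s i where "w ! j = (s, i, True)"
    by (cases "w ! j") auto
  then show "order_ext LPO (emul (emul (emon (take j w)) (rule_letter R_maj (w ! j))) (up (emon (drop (Suc j) w))))
      = (Poly_Mapping.single (LPO (take j w @ [(X, 0, True), (Y, 0, True)] @ up_word (drop (Suc j) w)))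
           (monom 1 (fst (snd (w ! j)))) :: 'k E)"
    using assms
    by (simp add: rule_letter_def R_maj_def fred_positive_word emon_positive_word emul_single
                  up_single order_ext_single)
qed

lemma qemb_eq_sum_upto:
  assumes "degree p \<le> N"
  shows "(qemb p :: 'k::comm_ring_1 L) = (\<Sum>i\<le>N. Poly_Mapping.single (int i, 0, 0) (coeff p i))"
  unfolding qemb_def by (rule sum.mono_neutral_left) (use assms in \<open>auto simp: coeff_eq_0\<close>)

lemma qemb_0 [simp]: "qemb 0 = 0"
  by (simp add: qemb_def)

lemma qemb_add: "qemb (p + q) = qemb p + qemb q"
proof -
  let ?N = "max (degree p) (degree q)"
  have "degree (p + q) \<le> ?N"
    by (rule degree_add_le) auto
  then show ?thesis
    by (simp add: qemb_eq_sum_upto[of _ ?N] single_add sum.distrib)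
qed

lemma qemb_sum: "qemb (\<Sum>i\<in>I. p i) = (\<Sum>i\<in>I. qemb (p i))"
  by (induction I rule: infinite_finite_induct) (simp_all add: qemb_add)

lemma qemb_monom: "qemb (monom c k) = Poly_Mapping.single (int k, 0, 0) c"
proof -
  have "qemb (monom c k) = (\<Sum>i\<le>k. Poly_Mapping.single (int i, 0, 0) (coeff (monom c k) i))"
    by (rule qemb_eq_sum_upto) (simp add: degree_monom_le)
  also have "\<dots> = Poly_Mapping.single (int k, 0, 0) c"
    by (subst sum.cong[OF refl, of _ _ "\<lambda>i. if i = k then Poly_Mapping.single (int k, 0, 0) c else 0"]) auto
  finally show ?thesis .
qed

lemma qemb_1 [simp]: "qemb 1 = 1"
  using qemb_monom[of 1 0] by (simp add: zero_prod_def flip: monom_eq_1 single_one)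

lemma qemb_mult: "qemb (p * q) = qemb p * qemb q"
proof -
  have "p * q = (\<Sum>i\<le>degree p. monom (coeff p i) i) * (\<Sum>j\<le>degree q. monom (coeff q j) j)"
    by (simp add: poly_as_sum_of_monoms)
  also have "\<dots> = (\<Sum>i\<le>degree p. \<Sum>j\<le>degree q. monom (coeff p i * coeff q j) (i + j))"
    by (simp add: sum_distrib_left sum_distrib_right mult_monom) (rule sum.swap)
  finally have "qemb (p * q) = (\<Sum>i\<le>degree p. \<Sum>j\<le>degree q.
               Poly_Mapping.single (int i, 0, 0) (coeff p i) * Poly_Mapping.single (int j, 0, 0) (coeff q j))"
    by (simp add: qemb_sum qemb_monom mult_single)
  also have "\<dots> = qemb p * qemb q"
    by (simp add: qemb_def sum_product)
  finally show ?thesis .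
qed

lemma phi_add: "phi (f + g) = phi f + phi g"
  unfolding phi_def by (rule setsum_keys_plus_distrib) (simp_all add: qemb_add distrib_right)

lemma phi_zero [simp]: "phi 0 = 0"
  by (simp add: phi_def)

lemma phi_sum: "phi (\<Sum>i\<in>I. f i) = (\<Sum>i\<in>I. phi (f i))"
  by (induction I rule: infinite_finite_induct) (simp_all add: phi_add)

lemma phi_single: "phi (Poly_Mapping.single w c) = qemb c * phi_word w"
  by (cases "c = 0") (simp_all add: phi_def)

lemma phi_escale: "phi (escale c f) = qemb c * phi f"
proof -
  have "phi (escale c f) = (\<Sum>w\<in>Poly_Mapping.keys f. qemb (Poly_Mapping.lookup (escale c f) w) * phi_word w)"
    unfolding phi_def by (rule sum.mono_neutral_left) (auto simp: in_keys_iff lookup_escale)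
  then show ?thesis
    by (simp add: lookup_escale qemb_mult phi_def sum_distrib_left mult.assoc)
qed

lemma phi_word_append: "phi_word (u @ v) = phi_word u * phi_word v"
  by (simp add: phi_word_def)

lemma phi_word_LPO: "phi_word (LPO w) = phi_word w"
  unfolding phi_word_def LPO_def by (metis mset_sort prod_mset_prod_list mset_map)

definition var_count :: "mvar \<Rightarrow> word \<Rightarrow> nat" where
  "var_count s w = length (filter (\<lambda>l. fst l = s) w)"

lemma var_count_simps [simp]:
  "var_count s [] = 0"
  "var_count s (l # w) = (if fst l = s then Suc (var_count s w) else var_count s w)"
  by (simp_all add: var_count_def)

lemma length_eq_var_count: "length w = var_count X w + var_count Y w"
proof (induction w)
  case (Cons l w)
  then show ?case
    by (cases "fst l") auto
qed simp

lemma phi_word_positive_word: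
  "positive_word w \<Longrightarrow>
     phi_word w = (lmono (int (sum_list (map (\<lambda>l. fst (snd l)) w))) (int (var_count X w)) (int (var_count Y w))
                     :: 'k::comm_ring_1 L)"
proof (induction w)
  case Nil
  then show ?case
    by (simp add: phi_word_def lmono_def zero_prod_def flip: single_one)
next
  case (Cons l w)
  then obtain s i where "l = (s, i, True)"
    by (cases l) auto
  with Cons show ?case
    by (cases s) (simp_all add: phi_word_def phi_letter_def lmono_mult algebra_simps)
qed

lemma var_count_up_word [simp]: "var_count s (up_word w) = var_count s w"
  by (induction w) (auto simp: up_word_def)

lemma sum_indices_up_word:
  "sum_list (map (\<lambda>l. fst (snd l)) (up_word w)) = sum_list (map (\<lambda>l. fst (snd l)) w) + length w"
  by (induction w) (auto simp: up_word_def)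

lemma phi_word_up_word:
  "positive_word w \<Longrightarrow> phi_word (up_word w) = (lmono (int (length w)) 0 0 * phi_word w :: 'k::comm_ring_1 L)"
  by (simp add: phi_word_positive_word sum_indices_up_word lmono_mult add.commute)

lemma phi_qder_word:
  assumes "positive_word w"
  shows "phi (qder_word R_maj LPO w :: 'k::comm_ring_1 E) = (\<Sum>j<length w.
           phi_word (take j w) * lmono (int (fst (snd (w ! j)))) 1 1 * phi_word (up_word (drop (Suc j) w)))"
proof -
  have "qemb (monom 1 i) * phi_word (u @ [(X, 0, True), (Y, 0, True)] @ v)
          = phi_word u * (lmono (int i) 0 0 * lmono 0 1 0 * lmono 0 0 1) * (phi_word v :: 'k L)" for i u v
    by (simp add: qemb_monom phi_word_append phi_word_def phi_letter_def mult_ac flip: lmono_def)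
  moreover have "lmono (int i) 0 0 * lmono 0 1 0 * lmono 0 0 1 = (lmono (int i) 1 1 :: 'k L)" for i
    by (simp add: lmono_mult)
  ultimately show ?thesis
    using assms by (simp add: qder_word_R_maj_LPO phi_sum phi_single phi_word_LPO)
qed

lemma phi_qder_word_Cons:
  assumes "positive_word (l # w)"
  shows "phi (qder_word R_maj LPO (l # w) :: 'k::comm_ring_1 E)
           = lmono (int (fst (snd l))) 1 1 * lmono (int (length w)) 0 0 * phi_word w
             + phi_letter l * phi (qder_word R_maj LPO w :: 'k E)"
  using assms
  by (simp add: phi_qder_word sum.lessThan_Suc_shift phi_word_up_word sum_distrib_left mult_ac
           del: sum.lessThan_Suc)
     (simp add: phi_word_def mult_ac)

definition lpo_normal :: "word \<Rightarrow> bool" where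
  "lpo_normal w \<longleftrightarrow> positive_word w \<and> sorted (map lpo_key w)"

lemma lpo_normal_LPO: "positive_word w \<Longrightarrow> lpo_normal (LPO w)"
  by (simp add: lpo_normal_def) (simp add: LPO_def)

lemma phi_qder_word_lpo_normal:
  "lpo_normal w \<Longrightarrow> phi (qder_word R_maj LPO w :: 'k::comm_ring_1 E)
                      = phi_word w * insertion_factor (var_count X w) (var_count Y w)"
proof (induction w)
  case Nil
  then show ?case
    by (simp add: insertion_factor_def qder_word_def)
next
  case (Cons l w)
  obtain s i where l: "l = (s, i, True)"
    using Cons.prems by (cases l) (auto simp: lpo_normal_def)
  have "lpo_normal w" and key_le: "\<forall>l'\<in>set w. lpo_key l \<le> lpo_key l'"
    using Cons.prems by (auto simp: lpo_normal_def)
  define a b where "a = var_count X w" and "b = var_count Y w"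
  have "length w = a + b"
    by (simp add: a_def b_def length_eq_var_count)
  then have expansion: "phi (qder_word R_maj LPO (l # w) :: 'k E)
               = lmono (int i) 1 1 * lmono (int (a + b)) 0 0 * phi_word w
                 + phi_letter l * (phi_word w * insertion_factor a b)"
    using Cons.prems Cons.IH[OF \<open>lpo_normal w\<close>]
    by (simp add: phi_qder_word_Cons l lpo_normal_def a_def b_def)
  show ?case
  proof (cases s)
    case X
    with expansion show ?thesis
      by (simp add: l phi_word_def phi_letter_def insertion_factor_Suc lmono_mult algebra_simps
               flip: a_def b_def)
  next
    case Y
    with key_le have "a = 0"
      by (auto simp: a_def var_count_def lpo_key_def l filter_empty_conv split: if_splits)
    with Y expansion show ?thesis
      by (simp add: l phi_word_def phi_letter_def insertion_factor_Suc_0 lmono_mult algebra_simps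
               flip: a_def b_def)
  qed
qed

lemma phi_D_maj:
  assumes "\<forall>w\<in>Poly_Mapping.keys f. lpo_normal w"
  shows "phi (D_maj f :: 'k::comm_ring_1 E) = maj_step (phi f)"
proof -
  have "phi (D_maj f :: 'k E)
          = (\<Sum>w\<in>Poly_Mapping.keys f. qemb (Poly_Mapping.lookup f w) * phi (qder_word R_maj LPO w :: 'k E))"
    by (simp add: D_maj_def qder_def elin_def phi_sum phi_escale)
  also have "\<dots> = (\<Sum>w\<in>Poly_Mapping.keys f. maj_step (qemb (Poly_Mapping.lookup f w) * phi_word w))"
  proof (rule sum.cong[OF refl])
    fix w assume "w \<in> Poly_Mapping.keys f"
    then have "lpo_normal w"
      using assms by blast
    then show "qemb (Poly_Mapping.lookup f w) * phi (qder_word R_maj LPO w :: 'k E)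
                 = maj_step (qemb (Poly_Mapping.lookup f w) * phi_word w)"
      by (simp add: phi_qder_word_lpo_normal phi_word_positive_word maj_step_qemb_mult mult.assoc
                    lpo_normal_def)
  qed
  also have "\<dots> = maj_step (phi f)"
    by (simp add: phi_def maj_step_sum)
  finally show ?thesis .
qed

lemma keys_D_maj_lpo_normal:
  assumes "\<forall>w\<in>Poly_Mapping.keys f. lpo_normal w"
  shows "\<forall>w\<in>Poly_Mapping.keys (D_maj f :: 'k::comm_ring_1 E). lpo_normal w"
proof
  fix v assume "v \<in> Poly_Mapping.keys (D_maj f :: 'k E)"
  moreover have "Poly_Mapping.keys (D_maj f :: 'k E)
                   \<subseteq> (\<Union>w\<in>Poly_Mapping.keys f. Poly_Mapping.keys (qder_word R_maj LPO w :: 'k E))"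
    unfolding D_maj_def qder_def elin_def by (rule order_trans[OF keys_sum]) (use keys_escale in blast)
  ultimately obtain w where w: "w \<in> Poly_Mapping.keys f"
    and v: "v \<in> Poly_Mapping.keys (qder_word R_maj LPO w :: 'k E)"
    by blast
  have "positive_word w"
    using assms w by (simp add: lpo_normal_def)
  define V where "V j = LPO (take j w @ [(X, 0, True), (Y, 0, True)] @ up_word (drop (Suc j) w))" for j
  have "v \<in> Poly_Mapping.keys (\<Sum>j<length w. Poly_Mapping.single (V j) (monom 1 (fst (snd (w ! j)))) :: 'k E)"
    using v by (simp add: qder_word_R_maj_LPO[OF \<open>positive_word w\<close>] V_def)
  then have "v \<in> (\<Union>j<length w. Poly_Mapping.keys (Poly_Mapping.single (V j) (monom 1 (fst (snd (w ! j)))) :: 'k E))"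
    by (rule keys_sum[THEN subsetD])
  then obtain j where "v \<in> Poly_Mapping.keys (Poly_Mapping.single (V j) (monom 1 (fst (snd (w ! j)))) :: 'k E)"
    by blast
  then have "v = V j"
    by (simp split: if_splits)
  then show "lpo_normal v"
    using \<open>positive_word w\<close> by (simp add: V_def lpo_normal_LPO)
qed

lemma D_maj_power_x0:
  "(\<forall>w\<in>Poly_Mapping.keys ((D_maj ^^ n) (emon [(X, 0, True)]) :: 'k::comm_ring_1 E). lpo_normal w)
   \<and> phi ((D_maj ^^ n) (emon [(X, 0, True)]) :: 'k E) = A_maj n"
proof (induction n)
  case 0
  have "(emon [(X, 0, True)] :: 'k E) = Poly_Mapping.single [(X, 0, True)] 1"
    by (simp add: emon_positive_word)
  then show ?case
    by (simp add: lpo_normal_def phi_single phi_word_def phi_letter_def A_maj_0)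
next
  case (Suc n)
  then have normal: "\<forall>w\<in>Poly_Mapping.keys ((D_maj ^^ n) (emon [(X, 0, True)]) :: 'k E). lpo_normal w"
    and phi_eq: "phi ((D_maj ^^ n) (emon [(X, 0, True)]) :: 'k E) = A_maj n"
    by blast+
  show ?case
    using keys_D_maj_lpo_normal[OF normal] phi_D_maj[OF normal] phi_eq by (simp add: A_maj_Suc)
qed

theorem theorem5p3:
  fixes n :: nat
  assumes "n \<ge> 1"
  shows "phi ((D_maj ^^ n) (emon [(X, 0, True)]) :: ('k::{comm_ring_1, ring_char_0}) E)
         = (A_maj n :: 'k L)"
  using D_maj_power_x0 by blast

end
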